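(* Let $N\ge2$, $s\in(0,1)$, $u\in H^s(\mathbb{R}^N)$ and $a\in\mathbb{R}$. Let $P_a u$ be the polarization of $u$ with respect to the hyperplane $\{x_1=a\}$. Then $$\langle u,u^+\rangle\ \ge\ \langle P_a u,(P_a u)^+\rangle \quad\text{and}\quad -\langle u,u^-\rangle\ \ge\ -\langle P_a u,(P_a u)^-\rangle .$$
   Context: $H^s(\mathbb{R}^N)=\{u\in L^2(\mathbb{R}^N): \iint\frac{|u(x)-u(y)|^2}{|x-y|^{N+2s}}dx\,dy<\infty\}$, and for $u,v\in H^s(\mathbb{R}^N)$, $\langle u,v\rangle=\frac{c_{N,s}}{2}\iint_{\mathbb{R}^N\times\mathbb{R}^N}\frac{(u(x)-u(y))(v(x)-v(y))}{|x-y|^{N+2s}}dx\,dy$ with $c_{N,s}=\frac{s2^{2s}\Gamma(\frac{N+2s}{2})}{\pi^{N/2}\Gamma(1-s)}$. Polarization: for $x=(x_1,\dots,x_N)$ let $\bar x=(2a-x_1,x_2,\dots,x_N)$, $\Sigma_a^-=\{x_1\le a\}$, $\Sigma_a^+=\{x_1\ge a\}$, and $(P_a u)(x)=\min\{u(x),u(\bar x)\}$ for $x\in\Sigma_a^+$, $(P_au)(x)=\max\{u(x),u(\bar x)\}$ for $x\in\Sigma_a^-$. Notation: $v^+=\max\{v,0\}$, $v^-=\max\{-v,0\}$. *)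

theory Defs
  imports "HOL-Analysis.Analysis"
begin

text \<open>Points of R^N are vectors of type real^'n, N = CARD('n).\<close>

definition in_Hs :: "real \<Rightarrow> (real^'n::finite \<Rightarrow> real) \<Rightarrow> bool" where
  "in_Hs s u \<longleftrightarrow>
     u \<in> borel_measurable lebesgue \<and>
     integrable lebesgue (\<lambda>x. (u x)\<^sup>2) \<and>
     integrable (lebesgue \<Otimes>\<^sub>M lebesgue)
       (\<lambda>(x,y). (u x - u y)\<^sup>2 / norm (x - y) powr (real CARD('n) + 2 * s))"

definition c_Ns :: "nat \<Rightarrow> real \<Rightarrow> real" where
  "c_Ns N s = s * 2 powr (2 * s) * Gamma ((real N + 2 * s) / 2)
              / (pi powr (real N / 2) * Gamma (1 - s))"

definition Hs_inner :: "real \<Rightarrow> (real^'n::finite \<Rightarrow> real) \<Rightarrow> (real^'n \<Rightarrow> real) \<Rightarrow> real" where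
  "Hs_inner s u v = c_Ns CARD('n) s / 2 *
     (\<integral>p. (case p of (x,y) \<Rightarrow>
        (u x - u y) * (v x - v y) / norm (x - y) powr (real CARD('n) + 2 * s))
      \<partial>(lebesgue \<Otimes>\<^sub>M lebesgue))"

definition reflect :: "'n::finite \<Rightarrow> real \<Rightarrow> real^'n \<Rightarrow> real^'n" where
  "reflect i a x = (\<chi> j. if j = i then 2 * a - x $ i else x $ j)"

definition polarization :: "'n::finite \<Rightarrow> real \<Rightarrow> (real^'n \<Rightarrow> real) \<Rightarrow> real^'n \<Rightarrow> real" where
  "polarization i a u x =
     (if x $ i \<ge> a then min (u x) (u (reflect i a x))
      else max (u x) (u (reflect i a x)))"

definition pos_part :: "('a \<Rightarrow> real) \<Rightarrow> 'a \<Rightarrow> real" where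
  "pos_part v x = max (v x) 0"

definition neg_part :: "('a \<Rightarrow> real) \<Rightarrow> 'a \<Rightarrow> real" where
  "neg_part v x = max (- v x) 0"

end

theory Submission
  imports Defs
begin

text \<open>Both quantities are energies
  \<open>\<integral>\<integral> \<Phi>(u x, u y) |x - y|\<^sup>-\<^sup>e\<close> whose integrands
  \<open>\<Phi>(p,q) = (p - q)(p\<^sup>+ - q\<^sup>+)\<close> and \<open>\<Phi>(p,q) = -(p - q)(p\<^sup>- - q\<^sup>-)\<close>
  are submodular. Write \<open>R\<close> for the reflection. For \<open>x, y\<close> in the half space
  \<open>x\<^sub>i \<ge> a\<close> the kernel is larger at \<open>(x,y)\<close> than at \<open>(x, R y)\<close>, and polarization
  puts the smaller of \<open>u x, u (R x)\<close> at \<open>x\<close>. By submodularity this sorting can only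
  decrease the sum of the integrand over the orbit \<open>(x,y), (R x,y), (x,R y), (R x,R y)\<close>.
  Since \<open>R\<close> preserves Lebesgue measure, integrating the orbit sum gives four times
  the energy.\<close>

lemma sigma_finite_lebesgue: "sigma_finite_measure (lebesgue :: 'a::euclidean_space measure)"
proof -
  obtain A :: "'a set set" where "countable A" "A \<subseteq> sets lborel" "\<Union>A = space lborel"
      "\<forall>a\<in>A. emeasure lborel a \<noteq> \<infinity>"
    using sigma_finite_lborel unfolding sigma_finite_measure_def by blast
  then show ?thesis
    unfolding sigma_finite_measure_def by (intro exI[of _ A]) (auto simp: emeasure_completion)
qed

lemma lebesgue_id_borel_measurable [measurable]:
  "(\<lambda>x. x) \<in> (lebesgue :: 'a::euclidean_space measure) \<rightarrow>\<^sub>M borel"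
  by (rule measurable_completion) simp

lemma reflect_reflect [simp]: "reflect i a (reflect i a x) = x"
  by (simp add: reflect_def vec_eq_iff)

lemma reflect_nth_same [simp]: "reflect i a x $ i = 2 * a - x $ i"
  by (simp add: reflect_def)

lemma reflect_eq_self: "x $ i = a \<Longrightarrow> reflect i a x = x"
  by (simp add: reflect_def vec_eq_iff)

lemma reflect_eq_add_axis: "reflect i a y = y + (2 * a - 2 * y $ i) *\<^sub>R axis i 1"
  by (simp add: reflect_def vec_eq_iff axis_def)

lemma reflect_eq_affine:
  fixes i :: "'n::finite"
  shows "reflect i a = (\<lambda>x. (2 * a) *\<^sub>R axis i 1
     + (\<Sum>j\<in>Basis. ((if j = axis i 1 then -1 else 1) * (x \<bullet> j)) *\<^sub>R j))"
proof
  fix x :: "real^'n"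
  have "(\<Sum>j\<in>Basis. ((if j = axis i 1 then -1 else 1) * (x \<bullet> j)) *\<^sub>R j)
      = (\<Sum>j\<in>Basis. (x \<bullet> j) *\<^sub>R j)
        - (\<Sum>j\<in>Basis. if j = axis i 1 then (2 * (x \<bullet> j)) *\<^sub>R j else 0)"
    by (subst sum_subtractf[symmetric], rule sum.cong) (auto simp: scaleR_diff_left[symmetric])
  also have "\<dots> = x - (2 * (x $ i)) *\<^sub>R axis i 1"
    by (simp add: sum.delta' inner_axis euclidean_representation)
  finally show "reflect i a x = (2 * a) *\<^sub>R axis i 1
      + (\<Sum>j\<in>Basis. ((if j = axis i 1 then -1 else 1) * (x \<bullet> j)) *\<^sub>R j)"
    by (simp add: reflect_def vec_eq_iff axis_def)
qed

lemma reflect_lebesgue_measurable: "reflect i a \<in> lebesgue \<rightarrow>\<^sub>M lebesgue"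
  unfolding reflect_eq_affine
  by (rule lebesgue_affine_measurable[where c = "\<lambda>j. if j = axis i 1 then -1 else 1"]) auto

lemma distr_reflect_lebesgue:
  fixes i :: "'n::finite"
  shows "distr lebesgue lebesgue (reflect i a) = lebesgue"
proof -
  have "(\<Prod>j\<in>(Basis :: (real^'n) set). \<bar>if j = axis i 1 then -1 else 1 :: real\<bar>) = 1"
    by (rule prod.neutral) auto
  then show ?thesis
    using lebesgue_affine_euclidean[where c = "\<lambda>j. if j = axis i (1::real) then -1 else 1"
        and t = "(2 * a) *\<^sub>R axis i 1"]
    by (simp add: reflect_eq_affine density_1)
qed

lemma norm_reflect_diff_reflect: "norm (reflect i a x - reflect i a y) = norm (x - y)"
proof -
  have "reflect i a x - reflect i a y = (\<chi> j. if j = i then - (x $ j - y $ j) else x $ j - y $ j)"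
    by (simp add: reflect_def vec_eq_iff)
  then show ?thesis
    unfolding norm_vec_def
    by (intro arg_cong[where f = "\<lambda>f. L2_set f UNIV"]) (auto simp: fun_eq_iff)
qed

lemma norm_reflect_diff_swap: "norm (reflect i a x - y) = norm (x - reflect i a y)"
  using norm_reflect_diff_reflect[of i a "reflect i a x" y] by simp

lemma norm_diff_reflect_sq:
  "(norm (x - reflect i a y))\<^sup>2 = (norm (x - y))\<^sup>2 + 4 * ((x $ i - a) * (y $ i - a))"
proof -
  have shift: "x - reflect i a y = (x - y) + (2 * (y $ i - a)) *\<^sub>R axis i 1"
    by (simp add: reflect_eq_add_axis algebra_simps)
  have "(norm (x - reflect i a y))\<^sup>2
      = (x - y) \<bullet> (x - y) + 4 * (y $ i - a) * ((x - y) \<bullet> axis i 1) + 4 * (y $ i - a)\<^sup>2"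
    unfolding shift power2_norm_eq_inner
    by (simp add: inner_add_left inner_add_right inner_commute
        power2_eq_square algebra_simps inner_axis_axis)
  then show ?thesis
    by (simp add: dot_square_norm inner_axis inner_diff_left power2_eq_square algebra_simps)
qed

lemma norm_diff_le_norm_diff_reflect:
  "a \<le> x $ i \<Longrightarrow> a \<le> y $ i \<Longrightarrow> norm (x - y) \<le> norm (x - reflect i a y)"
  by (rule power2_le_imp_le) (simp_all add: norm_diff_reflect_sq)

lemma polarization_reflect:
  "polarization i a v (reflect i a x)
     = (if a \<le> x $ i then max (v x) (v (reflect i a x)) else min (v x) (v (reflect i a x)))"
proof -
  consider "a < x $ i" | "a = x $ i" | "x $ i < a" by linarith
  then show ?thesis
    by cases (simp_all add: polarization_def reflect_eq_self max.commute min.commute)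
qed

lemma polarization_measurable:
  fixes i :: "'n::finite"
  assumes [measurable]: "v \<in> borel_measurable lebesgue"
  shows "polarization i a v \<in> borel_measurable lebesgue"
proof -
  have [measurable]: "(\<lambda>x. v (reflect i a x)) \<in> borel_measurable lebesgue"
    by (rule measurable_compose[OF reflect_lebesgue_measurable]) simp
  have [measurable]: "(\<lambda>x. x $ i) \<in> borel_measurable (lebesgue :: (real^'n) measure)"
    by (rule measurable_compose[OF lebesgue_id_borel_measurable]) simp
  show ?thesis unfolding polarization_def by measurable
qed

subsection \<open>Submodular integrands\<close>

definition submodular :: "(real \<Rightarrow> real \<Rightarrow> real) \<Rightarrow> bool" where
  "submodular \<Phi> \<longleftrightarrow>
     (\<forall>p1 p2 q1 q2. p1 \<le> p2 \<longrightarrow> q1 \<le> q2 \<longrightarrow> \<Phi> p1 q1 + \<Phi> p2 q2 \<le> \<Phi> p1 q2 + \<Phi> p2 q1)"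

lemma submodularI:
  assumes "\<And>p1 p2 q1 q2. p1 \<le> p2 \<Longrightarrow> q1 \<le> q2 \<Longrightarrow> \<Phi> p1 q1 + \<Phi> p2 q2 \<le> \<Phi> p1 q2 + \<Phi> p2 q1"
  shows "submodular \<Phi>"
  using assms unfolding submodular_def by blast

lemma submodular_sorted_weighted_le:
  assumes "submodular \<Phi>" and "kB \<le> kA \<or> (p1 = q1 \<and> p2 = q2)"
  shows "(\<Phi> (min p1 p2) (min q1 q2) + \<Phi> (max p1 p2) (max q1 q2)) * kA
       + (\<Phi> (max p1 p2) (min q1 q2) + \<Phi> (min p1 p2) (max q1 q2)) * kB
       \<le> (\<Phi> p1 q1 + \<Phi> p2 q2) * kA + (\<Phi> p2 q1 + \<Phi> p1 q2) * kB"
proof (cases "p1 \<le> p2 \<longleftrightarrow> q1 \<le> q2")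
  case True
  then show ?thesis by (cases "p1 \<le> p2") (auto simp: min_def max_def algebra_simps)
next
  case False
  then have k: "kB \<le> kA" using assms(2) by auto
  have "\<Phi> p1 q2 + \<Phi> p2 q1 \<le> \<Phi> p1 q1 + \<Phi> p2 q2"
    using assms(1) False unfolding submodular_def
    by (metis add.commute linorder_le_cases)
  then have "0 \<le> ((\<Phi> p1 q1 + \<Phi> p2 q2) - (\<Phi> p1 q2 + \<Phi> p2 q1)) * (kA - kB)"
    using k by simp
  then show ?thesis using False
    by (cases "p1 \<le> p2") (auto simp: min_def max_def algebra_simps)
qed

lemma submodular_square_diff: "submodular (\<lambda>p q. (p - q)\<^sup>2)"
proof (rule submodularI)
  fix p1 p2 q1 q2 :: real assume "p1 \<le> p2" "q1 \<le> q2"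
  then have "0 \<le> (p2 - p1) * (q2 - q1)" by simp
  then show "(p1 - q1)\<^sup>2 + (p2 - q2)\<^sup>2 \<le> (p1 - q2)\<^sup>2 + (p2 - q1)\<^sup>2"
    by (simp add: power2_eq_square algebra_simps)
qed

lemma submodular_diff_times_mono:
  assumes "mono g"
  shows "submodular (\<lambda>p q. (p - q) * (g p - g q))"
proof (rule submodularI)
  fix p1 p2 q1 q2 :: real assume "p1 \<le> p2" "q1 \<le> q2"
  then have "0 \<le> (p2 - p1) * (g q2 - g q1)" "0 \<le> (q2 - q1) * (g p2 - g p1)"
    using assms by (simp_all add: monoD)
  then show "(p1 - q1) * (g p1 - g q1) + (p2 - q2) * (g p2 - g q2)
      \<le> (p1 - q2) * (g p1 - g q2) + (p2 - q1) * (g p2 - g q1)"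
    by (simp add: algebra_simps)
qed

lemma abs_diff_times_le_square:
  fixes p q d :: real
  assumes "\<bar>d\<bar> \<le> \<bar>p - q\<bar>"
  shows "\<bar>(p - q) * d\<bar> \<le> (p - q)\<^sup>2"
  using mult_left_mono[OF assms abs_ge_zero[of "p - q"]]
  by (simp add: abs_mult power2_eq_square)

subsection \<open>Energies and their reflection orbit sums\<close>

definition singular_kernel :: "real \<Rightarrow> real^'n::finite \<Rightarrow> real^'n \<Rightarrow> real" where
  "singular_kernel e x y = inverse (norm (x - y) powr e)"

definition energy_density ::
    "(real \<Rightarrow> real \<Rightarrow> real) \<Rightarrow> real \<Rightarrow> (real^'n::finite \<Rightarrow> real) \<Rightarrow> (real^'n) \<times> (real^'n) \<Rightarrow> real"
  where "energy_density \<Phi> e v z = \<Phi> (v (fst z)) (v (snd z)) * singular_kernel e (fst z) (snd z)"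

definition orbit_energy_density ::
    "(real \<Rightarrow> real \<Rightarrow> real) \<Rightarrow> real \<Rightarrow> 'n::finite \<Rightarrow> real \<Rightarrow> (real^'n \<Rightarrow> real)
       \<Rightarrow> (real^'n) \<times> (real^'n) \<Rightarrow> real"
  where "orbit_energy_density \<Phi> e i a v z =
    energy_density \<Phi> e v z + energy_density \<Phi> e v (reflect i a (fst z), snd z)
    + energy_density \<Phi> e v (fst z, reflect i a (snd z))
    + energy_density \<Phi> e v (reflect i a (fst z), reflect i a (snd z))"

lemma singular_kernel_nonneg: "0 \<le> singular_kernel e x y"
  by (simp add: singular_kernel_def)

lemma singular_kernel_antimono:
  "0 \<le> e \<Longrightarrow> x \<noteq> y \<Longrightarrow> norm (x - y) \<le> norm (x - y') \<Longrightarrow> singular_kernel e x y' \<le> singular_kernel e x y"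
  unfolding singular_kernel_def by (rule le_imp_inverse_le) (auto intro: powr_mono2)

lemma orbit_energy_density_reflect_fst:
  "orbit_energy_density \<Phi> e i a v (reflect i a x, y) = orbit_energy_density \<Phi> e i a v (x, y)"
  by (simp add: orbit_energy_density_def ac_simps)

lemma orbit_energy_density_reflect_snd:
  "orbit_energy_density \<Phi> e i a v (x, reflect i a y) = orbit_energy_density \<Phi> e i a v (x, y)"
  by (simp add: orbit_energy_density_def ac_simps)

lemma orbit_energy_density_eq:
  "orbit_energy_density \<Phi> e i a v (x, y) =
      (\<Phi> (v x) (v y) + \<Phi> (v (reflect i a x)) (v (reflect i a y))) * singular_kernel e x y
    + (\<Phi> (v (reflect i a x)) (v y) + \<Phi> (v x) (v (reflect i a y)))
        * singular_kernel e x (reflect i a y)"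
  unfolding orbit_energy_density_def energy_density_def singular_kernel_def
  by (simp add: norm_reflect_diff_reflect norm_reflect_diff_swap algebra_simps)

lemma orbit_energy_density_polarization_le_half_space:
  assumes "submodular \<Phi>" and "0 \<le> e" and x: "a \<le> x $ i" and y: "a \<le> y $ i"
  shows "orbit_energy_density \<Phi> e i a (polarization i a v) (x, y) \<le> orbit_energy_density \<Phi> e i a v (x, y)"
proof -
  let ?R = "reflect i a" and ?w = "polarization i a v"
  have w: "?w x = min (v x) (v (?R x))" "?w (?R x) = max (v x) (v (?R x))"
      "?w y = min (v y) (v (?R y))" "?w (?R y) = max (v y) (v (?R y))"
    using x y by (simp_all only: polarization_reflect) (simp_all add: polarization_def)
  have "singular_kernel e x (?R y) \<le> singular_kernel e x y \<or> (v x = v y \<and> v (?R x) = v (?R y))"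
    using singular_kernel_antimono[OF assms(2) _ norm_diff_le_norm_diff_reflect[OF x y]] by auto
  from submodular_sorted_weighted_le[OF assms(1) this] show ?thesis
    by (simp only: orbit_energy_density_eq w)
qed

lemma orbit_energy_density_polarization_le:
  assumes "submodular \<Phi>" and "0 \<le> e"
  shows "orbit_energy_density \<Phi> e i a (polarization i a v) z \<le> orbit_energy_density \<Phi> e i a v z"
proof -
  have half_space: "\<exists>x'. (x' = x \<or> x' = reflect i a x) \<and> a \<le> x' $ i" for x
    by (cases "a \<le> x $ i") (blast, force intro!: exI[of _ "reflect i a x"])
  obtain x y where z: "z = (x, y)" by fastforce
  obtain x' y' where x': "x' = x \<or> x' = reflect i a x" "a \<le> x' $ i"
    and y': "y' = y \<or> y' = reflect i a y" "a \<le> y' $ i"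
    using half_space by meson
  have "orbit_energy_density \<Phi> e i a w z = orbit_energy_density \<Phi> e i a w (x', y')" for w
    using x'(1) y'(1) z
    by (auto simp: orbit_energy_density_reflect_fst orbit_energy_density_reflect_snd)
  then show ?thesis
    using orbit_energy_density_polarization_le_half_space[OF assms x'(2) y'(2)] by simp
qed

lemma singular_kernel_measurable:
  "(\<lambda>z. singular_kernel e (fst z) (snd z)) \<in> borel_measurable (lebesgue \<Otimes>\<^sub>M lebesgue)"
  unfolding singular_kernel_def by measurable

lemma energy_density_measurable:
  assumes v: "v \<in> borel_measurable lebesgue"
    and \<Phi>: "(\<lambda>(p, q). \<Phi> p q) \<in> borel_measurable borel"
  shows "energy_density \<Phi> e v \<in> borel_measurable (lebesgue \<Otimes>\<^sub>M lebesgue)"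
proof -
  have "(\<lambda>z. (v (fst z), v (snd z))) \<in> (lebesgue \<Otimes>\<^sub>M lebesgue) \<rightarrow>\<^sub>M (borel \<Otimes>\<^sub>M borel)"
    by (intro measurable_Pair measurable_compose[OF measurable_fst v] measurable_compose[OF measurable_snd v])
  then have "(\<lambda>z. (\<lambda>(p, q). \<Phi> p q) (v (fst z), v (snd z))) \<in> borel_measurable (lebesgue \<Otimes>\<^sub>M lebesgue)"
    by (rule measurable_compose) (simp add: borel_prod \<Phi>)
  then have "(\<lambda>z. \<Phi> (v (fst z)) (v (snd z))) \<in> borel_measurable (lebesgue \<Otimes>\<^sub>M lebesgue)"
    by simp
  from borel_measurable_times[OF this singular_kernel_measurable] show ?thesis
    by (simp add: energy_density_def[abs_def])
qed

lemma integral_product_map_preserving: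
  fixes h :: "'a \<times> 'b \<Rightarrow> real"
  assumes f: "f \<in> M \<rightarrow>\<^sub>M M" "distr M M f = M"
    and g: "g \<in> N \<rightarrow>\<^sub>M N" "distr N N g = N" "sigma_finite_measure N"
    and h: "h \<in> borel_measurable (M \<Otimes>\<^sub>M N)"
  shows "integrable (M \<Otimes>\<^sub>M N) (\<lambda>(x, y). h (f x, g y)) \<longleftrightarrow> integrable (M \<Otimes>\<^sub>M N) h"
    and "(\<integral>(x, y). h (f x, g y) \<partial>(M \<Otimes>\<^sub>M N)) = integral\<^sup>L (M \<Otimes>\<^sub>M N) h"
proof -
  have fg: "(\<lambda>(x, y). (f x, g y)) \<in> M \<Otimes>\<^sub>M N \<rightarrow>\<^sub>M M \<Otimes>\<^sub>M N"
    using f(1) g(1) by (simp add: case_prod_beta')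
  have distr: "distr (M \<Otimes>\<^sub>M N) (M \<Otimes>\<^sub>M N) (\<lambda>(x, y). (f x, g y)) = M \<Otimes>\<^sub>M N"
    using pair_measure_distr[OF f(1) g(1)] f(2) g(2,3) by simp
  show "integrable (M \<Otimes>\<^sub>M N) (\<lambda>(x, y). h (f x, g y)) \<longleftrightarrow> integrable (M \<Otimes>\<^sub>M N) h"
    using integrable_distr_eq[OF fg h] unfolding distr by (simp add: case_prod_beta')
  show "(\<integral>(x, y). h (f x, g y) \<partial>(M \<Otimes>\<^sub>M N)) = integral\<^sup>L (M \<Otimes>\<^sub>M N) h"
    using integral_distr[OF fg h] unfolding distr by (simp add: case_prod_beta')
qed

lemma orbit_energy_density_integral:
  fixes i :: "'n::finite"
  assumes v: "v \<in> borel_measurable lebesgue"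
    and \<Phi>: "(\<lambda>(p, q). \<Phi> p q) \<in> borel_measurable borel"
    and int: "integrable (lebesgue \<Otimes>\<^sub>M lebesgue) (energy_density \<Phi> e v)"
  shows "integrable (lebesgue \<Otimes>\<^sub>M lebesgue) (orbit_energy_density \<Phi> e i a v)"
    and "integral\<^sup>L (lebesgue \<Otimes>\<^sub>M lebesgue) (orbit_energy_density \<Phi> e i a v)
           = 4 * integral\<^sup>L (lebesgue \<Otimes>\<^sub>M lebesgue) (energy_density \<Phi> e v)"
proof -
  let ?M = "lebesgue \<Otimes>\<^sub>M lebesgue :: ((real^'n) \<times> (real^'n)) measure"
  let ?E = "energy_density \<Phi> e v" and ?R = "reflect i a"
  note E = energy_density_measurable[OF v \<Phi>]
  note R = reflect_lebesgue_measurable[of i a] distr_reflect_lebesgue[of i a] sigma_finite_lebesgue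
  have I: "(\<lambda>x. x) \<in> (lebesgue :: (real^'n) measure) \<rightarrow>\<^sub>M lebesgue"
      "distr lebesgue lebesgue (\<lambda>x::real^'n. x) = lebesgue"
      "sigma_finite_measure (lebesgue :: (real^'n) measure)"
    by (simp_all add: sigma_finite_lebesgue)
  note RI = integral_product_map_preserving[OF R(1,2) I E]
    and IR = integral_product_map_preserving[OF I(1,2) R E]
    and RR = integral_product_map_preserving[OF R(1,2) R E]
  have orbit: "orbit_energy_density \<Phi> e i a v = (\<lambda>z. ?E z + (\<lambda>(x, y). ?E (?R x, y)) z
      + (\<lambda>(x, y). ?E (x, ?R y)) z + (\<lambda>(x, y). ?E (?R x, ?R y)) z)"
    by (simp add: orbit_energy_density_def fun_eq_iff)
  show "integrable ?M (orbit_energy_density \<Phi> e i a v)"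
    unfolding orbit using int RI(1) IR(1) RR(1) by simp
  show "integral\<^sup>L ?M (orbit_energy_density \<Phi> e i a v) = 4 * integral\<^sup>L ?M ?E"
    unfolding orbit using int RI IR RR by simp
qed

lemma energy_density_integrable_dominated:
  assumes "v \<in> borel_measurable lebesgue"
    and "(\<lambda>(p, q). \<Phi> p q) \<in> borel_measurable borel"
    and "\<And>p q. \<bar>\<Phi> p q\<bar> \<le> \<Psi> p q"
    and "integrable (lebesgue \<Otimes>\<^sub>M lebesgue) (energy_density \<Psi> e v)"
  shows "integrable (lebesgue \<Otimes>\<^sub>M lebesgue) (energy_density \<Phi> e v)"
proof (rule Bochner_Integration.integrable_bound[OF assms(4) energy_density_measurable[OF assms(1,2)]])
  have "\<bar>energy_density \<Phi> e v z\<bar> \<le> energy_density \<Psi> e v z" for z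
    using assms(3)[of "v (fst z)" "v (snd z)"] singular_kernel_nonneg[of e "fst z" "snd z"]
    by (simp add: energy_density_def abs_mult mult_right_mono)
  then show "AE z in lebesgue \<Otimes>\<^sub>M lebesgue. norm (energy_density \<Phi> e v z) \<le> norm (energy_density \<Psi> e v z)"
    by (intro AE_I2) (simp add: order_trans[OF _ abs_ge_self])
qed

lemma energy_density_polarization_integrable:
  fixes i :: "'n::finite"
  assumes v: "v \<in> borel_measurable lebesgue" and "0 \<le> e"
    and int: "integrable (lebesgue \<Otimes>\<^sub>M lebesgue) (energy_density (\<lambda>p q. (p - q)\<^sup>2) e v)"
  shows "integrable (lebesgue \<Otimes>\<^sub>M lebesgue) (energy_density (\<lambda>p q. (p - q)\<^sup>2) e (polarization i a v))"
proof -
  let ?sq = "\<lambda>p q. (p - q)\<^sup>2 :: real"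
  have sq: "(\<lambda>(p, q). ?sq p q) \<in> borel_measurable borel"
    unfolding case_prod_beta by (intro borel_measurable_continuous_onI continuous_intros)
  have nonneg: "0 \<le> energy_density ?sq e w z" for w :: "real^'n \<Rightarrow> real" and z
    by (simp add: energy_density_def singular_kernel_nonneg)
  have dominated: "energy_density ?sq e (polarization i a v) z \<le> orbit_energy_density ?sq e i a v z" for z
  proof -
    have "energy_density ?sq e (polarization i a v) z \<le> orbit_energy_density ?sq e i a (polarization i a v) z"
      unfolding orbit_energy_density_def using nonneg by (simp add: add_increasing2)
    also have "\<dots> \<le> orbit_energy_density ?sq e i a v z"
      by (rule orbit_energy_density_polarization_le[OF submodular_square_diff \<open>0 \<le> e\<close>])
    finally show ?thesis .
  qed
  show ?thesis
  proof (rule Bochner_Integration.integrable_bound[OF orbit_energy_density_integral(1)[OF v sq int]])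
    show "energy_density ?sq e (polarization i a v) \<in> borel_measurable (lebesgue \<Otimes>\<^sub>M lebesgue)"
      by (rule energy_density_measurable[OF polarization_measurable[OF v] sq])
    show "AE z in lebesgue \<Otimes>\<^sub>M lebesgue. norm (energy_density ?sq e (polarization i a v) z)
        \<le> norm (orbit_energy_density ?sq e i a v z)"
    proof (rule AE_I2)
      fix z
      show "norm (energy_density ?sq e (polarization i a v) z) \<le> norm (orbit_energy_density ?sq e i a v z)"
        using dominated[of z] nonneg[of "polarization i a v" z] by simp
    qed
  qed
qed

lemma energy_density_polarization_le:
  fixes v :: "real^'n::finite \<Rightarrow> real"
  assumes v: "v \<in> borel_measurable lebesgue"
    and int: "integrable (lebesgue \<Otimes>\<^sub>M lebesgue) (energy_density (\<lambda>p q. (p - q)\<^sup>2) e v)"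
    and \<Phi>: "(\<lambda>(p, q). \<Phi> p q) \<in> borel_measurable borel"
    and "submodular \<Phi>" and bound: "\<And>p q. \<bar>\<Phi> p q\<bar> \<le> (p - q)\<^sup>2" and "0 \<le> e"
  shows "integral\<^sup>L (lebesgue \<Otimes>\<^sub>M lebesgue) (energy_density \<Phi> e (polarization i a v))
           \<le> integral\<^sup>L (lebesgue \<Otimes>\<^sub>M lebesgue) (energy_density \<Phi> e v)"
proof -
  let ?M = "lebesgue \<Otimes>\<^sub>M lebesgue :: ((real^'n) \<times> (real^'n)) measure"
  let ?w = "polarization i a v"
  have w: "?w \<in> borel_measurable lebesgue" by (rule polarization_measurable[OF v])
  have int_v: "integrable ?M (energy_density \<Phi> e v)"
    by (rule energy_density_integrable_dominated[OF v \<Phi> bound int])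
  have int_w: "integrable ?M (energy_density \<Phi> e ?w)"
    by (rule energy_density_integrable_dominated[OF w \<Phi> bound
          energy_density_polarization_integrable[OF v \<open>0 \<le> e\<close> int]])
  have "4 * integral\<^sup>L ?M (energy_density \<Phi> e ?w) = integral\<^sup>L ?M (orbit_energy_density \<Phi> e i a ?w)"
    by (rule orbit_energy_density_integral(2)[OF w \<Phi> int_w, symmetric])
  also have "\<dots> \<le> integral\<^sup>L ?M (orbit_energy_density \<Phi> e i a v)"
    by (intro integral_mono orbit_energy_density_integral(1) w v \<Phi> int_v int_w
        orbit_energy_density_polarization_le \<open>submodular \<Phi>\<close> \<open>0 \<le> e\<close>)
  also have "\<dots> = 4 * integral\<^sup>L ?M (energy_density \<Phi> e v)"
    by (rule orbit_energy_density_integral(2)[OF v \<Phi> int_v])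
  finally show ?thesis by simp
qed

subsection \<open>The fractional Sobolev form\<close>

lemma c_Ns_nonneg: "0 < s \<Longrightarrow> s < 1 \<Longrightarrow> 0 \<le> c_Ns N s"
  unfolding c_Ns_def
  by (intro divide_nonneg_pos mult_nonneg_nonneg mult_pos_pos Gamma_real_pos less_imp_le) auto

lemma in_Hs_energy_integrable:
  fixes u :: "real^'n::finite \<Rightarrow> real"
  assumes "in_Hs s u"
  shows "integrable (lebesgue \<Otimes>\<^sub>M lebesgue)
           (energy_density (\<lambda>p q. (p - q)\<^sup>2) (real CARD('n) + 2 * s) u)"
proof -
  have "energy_density (\<lambda>p q. (p - q)\<^sup>2) (real CARD('n) + 2 * s) u
      = (\<lambda>(x, y). (u x - u y)\<^sup>2 / norm (x - y) powr (real CARD('n) + 2 * s))"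
    by (auto simp: energy_density_def singular_kernel_def divide_inverse fun_eq_iff)
  then show ?thesis using assms by (simp add: in_Hs_def)
qed

lemma Hs_inner_pos_part:
  fixes v :: "real^'n::finite \<Rightarrow> real"
  shows "Hs_inner s v (pos_part v) = c_Ns CARD('n) s / 2 * integral\<^sup>L (lebesgue \<Otimes>\<^sub>M lebesgue)
      (energy_density (\<lambda>p q. (p - q) * (max p 0 - max q 0)) (real CARD('n) + 2 * s) v)"
  unfolding Hs_inner_def
  by (intro arg_cong[where f = "\<lambda>t. _ * t"] Bochner_Integration.integral_cong)
     (auto simp: energy_density_def singular_kernel_def pos_part_def divide_inverse)

lemma Hs_inner_neg_part:
  fixes v :: "real^'n::finite \<Rightarrow> real"
  shows "- Hs_inner s v (neg_part v) = c_Ns CARD('n) s / 2 * integral\<^sup>L (lebesgue \<Otimes>\<^sub>M lebesgue)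
      (energy_density (\<lambda>p q. (p - q) * (min p 0 - min q 0)) (real CARD('n) + 2 * s) v)"
proof -
  have min_eq: "min p 0 - min q 0 = - (max (- p) 0 - max (- q) 0)" for p q :: real
    by (simp add: min_def max_def)
  have "integral\<^sup>L (lebesgue \<Otimes>\<^sub>M lebesgue)
        (energy_density (\<lambda>p q. (p - q) * (min p 0 - min q 0)) (real CARD('n) + 2 * s) v)
      = integral\<^sup>L (lebesgue \<Otimes>\<^sub>M lebesgue) (\<lambda>z. - (case z of (x, y) \<Rightarrow>
          (v x - v y) * (neg_part v x - neg_part v y) / norm (x - y) powr (real CARD('n) + 2 * s)))"
    by (intro Bochner_Integration.integral_cong)
       (auto simp: energy_density_def singular_kernel_def neg_part_def divide_inverse min_eq algebra_simps)
  then show ?thesis unfolding Hs_inner_def by simp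
qed

lemma energy_density_polarization_le_mono_lipschitz:
  fixes v :: "real^'n::finite \<Rightarrow> real" and g :: "real \<Rightarrow> real"
  assumes "v \<in> borel_measurable lebesgue"
    and "integrable (lebesgue \<Otimes>\<^sub>M lebesgue) (energy_density (\<lambda>p q. (p - q)\<^sup>2) e v)"
    and "0 \<le> e" and "mono g" and lipschitz: "\<And>p q. \<bar>g p - g q\<bar> \<le> \<bar>p - q\<bar>"
  shows "integral\<^sup>L (lebesgue \<Otimes>\<^sub>M lebesgue)
           (energy_density (\<lambda>p q. (p - q) * (g p - g q)) e (polarization i a v))
         \<le> integral\<^sup>L (lebesgue \<Otimes>\<^sub>M lebesgue) (energy_density (\<lambda>p q. (p - q) * (g p - g q)) e v)"
proof (rule energy_density_polarization_le[OF assms(1,2) _ submodular_diff_times_mono[OF \<open>mono g\<close>]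
      abs_diff_times_le_square[OF lipschitz] \<open>0 \<le> e\<close>])
  have [measurable]: "g \<in> borel_measurable borel"
    by (rule borel_measurable_mono[OF \<open>mono g\<close>])
  have "(\<lambda>(p, q). (p - q) * (g p - g q)) \<in> borel_measurable (borel \<Otimes>\<^sub>M borel)"
    by measurable
  then show "(\<lambda>(p, q). (p - q) * (g p - g q)) \<in> borel_measurable borel"
    by (simp add: borel_prod)
qed

theorem lemma2:
  fixes u :: "real^'n::finite \<Rightarrow> real" and s a :: real and i :: 'n
  assumes "CARD('n) \<ge> 2"
    and "0 < s" and "s < 1"
    and "in_Hs s u"
  shows "Hs_inner s u (pos_part u)
           \<ge> Hs_inner s (polarization i a u) (pos_part (polarization i a u))
         \<and> - Hs_inner s u (neg_part u)
           \<ge> - Hs_inner s (polarization i a u) (neg_part (polarization i a u))"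
proof -
  let ?e = "real CARD('n) + 2 * s"
  have u: "u \<in> borel_measurable lebesgue" using \<open>in_Hs s u\<close> by (simp add: in_Hs_def)
  note int = in_Hs_energy_integrable[OF \<open>in_Hs s u\<close>]
  have e: "0 \<le> ?e" using \<open>0 < s\<close> by simp
  have c: "0 \<le> c_Ns CARD('n) s / 2" using c_Ns_nonneg[OF \<open>0 < s\<close> \<open>s < 1\<close>] by simp
  have pos: "integral\<^sup>L (lebesgue \<Otimes>\<^sub>M lebesgue)
        (energy_density (\<lambda>p q. (p - q) * (max p 0 - max q 0)) ?e (polarization i a u))
      \<le> integral\<^sup>L (lebesgue \<Otimes>\<^sub>M lebesgue) (energy_density (\<lambda>p q. (p - q) * (max p 0 - max q 0)) ?e u)"
    by (rule energy_density_polarization_le_mono_lipschitz[OF u int e])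
       (rule monoI, linarith, simp add: max_def abs_if)
  have neg: "integral\<^sup>L (lebesgue \<Otimes>\<^sub>M lebesgue)
        (energy_density (\<lambda>p q. (p - q) * (min p 0 - min q 0)) ?e (polarization i a u))
      \<le> integral\<^sup>L (lebesgue \<Otimes>\<^sub>M lebesgue) (energy_density (\<lambda>p q. (p - q) * (min p 0 - min q 0)) ?e u)"
    by (rule energy_density_polarization_le_mono_lipschitz[OF u int e])
       (rule monoI, linarith, simp add: min_def abs_if)
  show ?thesis
    unfolding Hs_inner_pos_part Hs_inner_neg_part
    using mult_left_mono[OF pos c] mult_left_mono[OF neg c] by simp
qed

end
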